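(* Let $m,n,k$ be positive integers with $k<n$, $A\in\mathbb{R}^{m\times n}$, $x^*\in\mathbb{R}^n$ with support $S^*$ satisfying $1\le|S^*|\le k$, $e\in\mathbb{R}^m$, $y=Ax^*+e$. Let $\mathcal{X}^0\in\mathbb{R}^n$, $\eta>0$, let $(S^t,x^t,\mathcal{X}^t)_{t\ge0}$ be generated by SEA, $b^t=u^t-\eta A^T(Ax^t-y)$ and $B=\sup_{t\in\mathbb{N}}\|b^t\|_\infty$. If $$B<\frac{1}{2\sum_{i\in S^*}\frac{1}{\eta|x^*_i|}},$$ then there exists an integer $t_s\le T'_{max}$ such that $S^*\subseteq S^{t_s}$, where $$T'_{max}=\frac{\sum_{i\in S^*}\frac{\max_{j\notin S^*}|\mathcal{X}^0_j|+|\mathcal{X}^0_i|}{\eta|x^*_i|}+k+1}{1-2B\sum_{i\in S^*}\frac{1}{\eta|x^*_i|}}.$$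
   Context: $S^*=\{i:x^*_i\neq0\}$. For $v\in\mathbb{R}^n$, $\mathrm{largest}_k(v)$ is the set of indices of the $k$ entries of $v$ with largest absolute value (ties broken by selecting the highest indices). For $S\subseteq\{1,\dots,n\}$, $A_S$ is the submatrix of columns indexed by $S$, $v_S$ the restriction of a vector to $S$, $A_S^\dagger$ the Moore–Penrose pseudoinverse of $A_S$. SEA with initialization $\mathcal{X}^0$ and step size $\eta$ generates, for $t=0,1,2,\dots$: $S^t=\mathrm{largest}_k(\mathcal{X}^t)$; $x^t_i=0$ for $i\notin S^t$ and $x^t_{S^t}=A_{S^t}^\dagger y$; $\mathcal{X}^{t+1}=\mathcal{X}^t-\eta A^T(Ax^t-y)$. The oracle direction is $u^t_i=-\eta x^*_i$ if $i\in S^*\setminus S^t$ and $u^t_i=0$ otherwise. *)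

theory Defs
  imports Complex_Main
begin

text \<open>Conventions: indices are 0-based. Vectors in R^n are functions nat => real
  (only entries with index < n matter); an m x n matrix A is a function
  nat => nat => real, entry A i j for i < m, j < n.\<close>

text \<open>largest_k(v): the k indices of largest |v_i| among 0..n-1, ties broken in
  favour of higher indices, i.e. the top k elements for the strict total order
  j above i iff (|v j|, j) > (|v i|, i) lexicographically.\<close>
definition largest :: "nat \<Rightarrow> nat \<Rightarrow> (nat \<Rightarrow> real) \<Rightarrow> nat set" where
  "largest n k v = {i. i < n \<and>
      card {j. j < n \<and> (\<bar>v j\<bar> > \<bar>v i\<bar> \<or> (\<bar>v j\<bar> = \<bar>v i\<bar> \<and> j > i))} < k}"

text \<open>Penrose conditions for G (rows indexed by S, columns by 0..m-1) being the
  Moore-Penrose pseudoinverse of the column submatrix A_S (rows 0..m-1, columns S).\<close>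
definition penrose :: "(nat \<Rightarrow> nat \<Rightarrow> real) \<Rightarrow> nat \<Rightarrow> nat set \<Rightarrow> (nat \<Rightarrow> nat \<Rightarrow> real) \<Rightarrow> bool" where
  "penrose A m S G \<longleftrightarrow>
     (let AG = (\<lambda>i r. \<Sum>l\<in>S. A i l * G l r);
          GA = (\<lambda>l j. \<Sum>r<m. G l r * A r j) in
      (\<forall>i<m. \<forall>j\<in>S. (\<Sum>r<m. AG i r * A r j) = A i j) \<and>
      (\<forall>l\<in>S. \<forall>r<m. (\<Sum>j\<in>S. GA l j * G j r) = G l r) \<and>
      (\<forall>i<m. \<forall>r<m. AG i r = AG r i) \<and>
      (\<forall>l\<in>S. \<forall>j\<in>S. GA l j = GA j l))"

definition pinv_sub :: "(nat \<Rightarrow> nat \<Rightarrow> real) \<Rightarrow> nat \<Rightarrow> nat set \<Rightarrow> (nat \<Rightarrow> nat \<Rightarrow> real)" where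
  "pinv_sub A m S = (THE G. penrose A m S G \<and> (\<forall>l r. (l \<notin> S \<or> m \<le> r) \<longrightarrow> G l r = 0))"

definition sea_x :: "(nat \<Rightarrow> nat \<Rightarrow> real) \<Rightarrow> (nat \<Rightarrow> real) \<Rightarrow> nat \<Rightarrow> nat set \<Rightarrow> nat \<Rightarrow> real" where
  "sea_x A y m S = (\<lambda>j. if j \<in> S then (\<Sum>i<m. pinv_sub A m S j i * y i) else 0)"

definition grad :: "(nat \<Rightarrow> nat \<Rightarrow> real) \<Rightarrow> (nat \<Rightarrow> real) \<Rightarrow> nat \<Rightarrow> nat \<Rightarrow> (nat \<Rightarrow> real) \<Rightarrow> nat \<Rightarrow> real" where
  "grad A y m n x = (\<lambda>j. \<Sum>i<m. A i j * ((\<Sum>l<n. A i l * x l) - y i))"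

primrec sea_X :: "(nat \<Rightarrow> nat \<Rightarrow> real) \<Rightarrow> (nat \<Rightarrow> real) \<Rightarrow> nat \<Rightarrow> nat \<Rightarrow> nat \<Rightarrow> real
                   \<Rightarrow> (nat \<Rightarrow> real) \<Rightarrow> nat \<Rightarrow> nat \<Rightarrow> real" where
  "sea_X A y m n k \<eta> X0 0 = X0"
| "sea_X A y m n k \<eta> X0 (Suc t) =
     (let X = sea_X A y m n k \<eta> X0 t; x = sea_x A y m (largest n k X) in
      (\<lambda>j. X j - \<eta> * grad A y m n x j))"

definition sea_S where
  "sea_S A y m n k \<eta> X0 t = largest n k (sea_X A y m n k \<eta> X0 t)"

definition sea_xt where
  "sea_xt A y m n k \<eta> X0 t = sea_x A y m (sea_S A y m n k \<eta> X0 t)"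

definition oracle_u :: "real \<Rightarrow> (nat \<Rightarrow> real) \<Rightarrow> nat set \<Rightarrow> nat set \<Rightarrow> nat \<Rightarrow> real" where
  "oracle_u \<eta> xs Ss St = (\<lambda>i. if i \<in> Ss - St then - \<eta> * xs i else 0)"

definition supp :: "nat \<Rightarrow> (nat \<Rightarrow> real) \<Rightarrow> nat set" where
  "supp n v = {i. i < n \<and> v i \<noteq> 0}"

definition norm_inf :: "nat \<Rightarrow> (nat \<Rightarrow> real) \<Rightarrow> real" where
  "norm_inf n v = Max ((\<lambda>j. \<bar>v j\<bar>) ` {..<n})"

end

theory Submission
  imports Defs
begin

text \<open>Rewrite the update as X(t+1) = X(t) + b(t) - u(t): a coordinate i of S* that is missed by
  S(t) gains the drift eta x*_i on top of the perturbation b(t), all other coordinates only feel the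
  perturbation. When i is missed, some coordinate outside S* is at least as large in modulus, and
  those never exceed max_{j not in S*} |X0_j| + t B. Comparing with X(t)_i shows that i is missed at
  most (max_{j not in S*} |X0_j| + |X0_i| + 2 T B) / (eta |x*_i|) + 1 times before time T. While
  S* is not covered every step misses some i in S*, so T is at most the sum of these bounds, which
  grows only like 2 B Sigma T with 2 B Sigma < 1.\<close>

lemma not_in_largest_dominated:
  assumes "finite S" "card S \<le> k" "i \<in> S" "i < n" "i \<notin> largest n k v"
  shows "\<exists>j<n. j \<notin> S \<and> \<bar>v i\<bar> \<le> \<bar>v j\<bar>"
proof (rule ccontr)
  assume none: "\<not> ?thesis"
  define above where
    "above = {j. j < n \<and> (\<bar>v j\<bar> > \<bar>v i\<bar> \<or> (\<bar>v j\<bar> = \<bar>v i\<bar> \<and> j > i))}"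
  have "k \<le> card above"
    using assms(4,5) unfolding largest_def above_def by auto
  moreover have "above \<subseteq> S - {i}"
  proof
    fix j assume "j \<in> above"
    then have "j < n" "\<bar>v i\<bar> \<le> \<bar>v j\<bar>" "j \<noteq> i"
      unfolding above_def by auto
    then show "j \<in> S - {i}"
      using none by blast
  qed
  then have "card above \<le> card (S - {i})"
    using assms(1) by (intro card_mono) auto
  then have "card above < card S"
    using assms(1,3) card_Diff1_less[of S i] by linarith
  ultimately show False
    using assms(2) by linarith
qed

definition misses :: "(nat \<Rightarrow> nat set) \<Rightarrow> nat \<Rightarrow> nat \<Rightarrow> nat" where
  "misses St i T = card {t. t < T \<and> i \<notin> St t}"

lemma misses_0 [simp]: "misses St i 0 = 0"
  by (simp add: misses_def)

lemma misses_Suc: "misses St i (Suc T) = misses St i T + (if i \<in> St T then 0 else 1)"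
proof -
  have "{t. t < Suc T \<and> i \<notin> St t} =
        {t. t < T \<and> i \<notin> St t} \<union> (if i \<in> St T then {} else {T})"
    by (auto simp: less_Suc_eq)
  then show ?thesis
    unfolding misses_def by simp
qed

lemma drift_unfold:
  fixes X b :: "nat \<Rightarrow> nat \<Rightarrow> real"
  assumes "\<And>t. X (Suc t) i = X t i + b t i + (if i \<in> St t then 0 else d)"
  shows "X T i = X 0 i + (\<Sum>t<T. b t i) + real (misses St i T) * d"
  by (induction T) (simp_all add: assms misses_Suc algebra_simps)

lemma sum_misses_ge:
  assumes "finite S" "\<forall>t<T. \<not> S \<subseteq> St t"
  shows "T \<le> (\<Sum>i\<in>S. misses St i T)"
  using assms(2)
proof (induction T)
  case (Suc T)
  then obtain i where i: "i \<in> S" "i \<notin> St T"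
    by auto
  have "1 \<le> (\<Sum>i\<in>S. if i \<in> St T then 0 else 1::nat)"
    using member_le_sum[OF i(1), of "\<lambda>i. if i \<in> St T then 0 else 1::nat"] i(2) assms(1)
    by simp
  with Suc show ?case
    by (simp add: misses_Suc sum.distrib)
qed simp

locale perturbed_drift =
  fixes n k :: nat and S :: "nat set" and X b :: "nat \<Rightarrow> nat \<Rightarrow> real"
    and d :: "nat \<Rightarrow> real" and B M0 :: real
  assumes S_sub: "S \<subseteq> {..<n}" and card_S: "card S \<le> k" and k_less: "k < n"
    and step: "\<And>t j. X (Suc t) j = X t j + b t j + (if j \<in> S - largest n k (X t) then d j else 0)"
    and b_bound: "\<And>t j. j < n \<Longrightarrow> \<bar>b t j\<bar> \<le> B"
    and M0_bound: "\<And>j. j < n \<Longrightarrow> j \<notin> S \<Longrightarrow> \<bar>X 0 j\<bar> \<le> M0"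
    and d_nonzero: "\<And>i. i \<in> S \<Longrightarrow> d i \<noteq> 0"
begin

abbreviation St :: "nat \<Rightarrow> nat set" where
  "St t \<equiv> largest n k (X t)"

lemma finite_S: "finite S"
  using S_sub finite_subset by blast

lemma M0_nonneg: "0 \<le> M0"
proof -
  have "\<not> {..<n} \<subseteq> S"
  proof
    assume "{..<n} \<subseteq> S"
    then have "card {..<n} \<le> card S"
      using finite_S by (rule card_mono[rotated])
    then show False
      using card_S k_less by simp
  qed
  then obtain j where "j < n" "j \<notin> S"
    by auto
  then show ?thesis
    using M0_bound abs_ge_zero order_trans by blast
qed

lemma sum_b_bound:
  assumes "j < n"
  shows "\<bar>\<Sum>t<T. b t j\<bar> \<le> real T * B"
proof -
  have "\<bar>\<Sum>t<T. b t j\<bar> \<le> (\<Sum>t<T. \<bar>b t j\<bar>)"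
    by (rule sum_abs)
  also have "\<dots> \<le> (\<Sum>t<T. B)"
    using b_bound[OF assms] by (intro sum_mono) auto
  finally show ?thesis
    by simp
qed

lemma abs_X_outside_le:
  assumes "j < n" "j \<notin> S"
  shows "\<bar>X T j\<bar> \<le> M0 + real T * B"
proof -
  have "X T j = X 0 j + (\<Sum>t<T. b t j)"
    using drift_unfold[where d = 0 and St = St, of X j b T] step assms(2) by simp
  then show ?thesis
    using M0_bound[OF assms] sum_b_bound[OF assms(1), of T] by linarith
qed

lemma X_inside_eq:
  assumes "i \<in> S"
  shows "X T i = X 0 i + (\<Sum>t<T. b t i) + real (misses St i T) * d i"
  by (rule drift_unfold) (use step assms in auto)

lemma misses_weighted_le:
  assumes "i \<in> S"
  shows "\<bar>d i\<bar> * misses St i T \<le> M0 + \<bar>X 0 i\<bar> + 2 * real T * B + \<bar>d i\<bar>"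
proof (induction T)
  case 0
  show ?case
    using M0_nonneg by simp
next
  case (Suc T)
  have i: "i < n"
    using S_sub assms by auto
  have B: "0 \<le> B"
    using b_bound[OF i] by (meson abs_ge_zero order_trans)
  show ?case
  proof (cases "i \<in> St T")
    case True
    then show ?thesis
      using Suc B by (simp add: misses_Suc algebra_simps)
  next
    case False
    then obtain j where j: "j < n" "j \<notin> S" "\<bar>X T i\<bar> \<le> \<bar>X T j\<bar>"
      using not_in_largest_dominated[OF finite_S card_S assms i] by blast
    have "\<bar>d i\<bar> * misses St i T = \<bar>X T i - X 0 i - (\<Sum>t<T. b t i)\<bar>"
      using X_inside_eq[OF assms, of T] by (simp add: abs_mult)
    also have "\<dots> \<le> (M0 + real T * B) + \<bar>X 0 i\<bar> + real T * B"
      using abs_X_outside_le[OF j(1,2), of T] j(3) sum_b_bound[OF i, of T] by linarith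
    finally show ?thesis
      using False B by (simp add: misses_Suc algebra_simps)
  qed
qed

theorem support_covered_within:
  defines "\<Sigma> \<equiv> \<Sum>i\<in>S. 1 / \<bar>d i\<bar>"
    and "C \<equiv> \<Sum>i\<in>S. (M0 + \<bar>X 0 i\<bar>) / \<bar>d i\<bar>"
  assumes small: "2 * B * \<Sigma> < 1"
  shows "\<exists>t. real t \<le> (C + real k + 1) / (1 - 2 * B * \<Sigma>) \<and> S \<subseteq> St t"
proof (rule ccontr)
  assume never: "\<not> ?thesis"
  define Tmax where "Tmax = (C + real k + 1) / (1 - 2 * B * \<Sigma>)"
  have "0 \<le> C"
    unfolding C_def using M0_nonneg by (intro sum_nonneg) simp
  then have "0 \<le> Tmax"
    unfolding Tmax_def using small by simp
  define T where "T = nat \<lfloor>Tmax\<rfloor> + 1"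
  have "Tmax < real T"
    unfolding T_def using \<open>0 \<le> Tmax\<close> by linarith
  have "\<forall>t<T. \<not> S \<subseteq> St t"
  proof (intro allI impI)
    fix t assume "t < T"
    then have "real t \<le> Tmax"
      unfolding T_def using \<open>0 \<le> Tmax\<close> by linarith
    then show "\<not> S \<subseteq> St t"
      using never unfolding Tmax_def by blast
  qed
  then have "real T \<le> (\<Sum>i\<in>S. real (misses St i T))"
    using sum_misses_ge[OF finite_S] by (metis of_nat_le_iff of_nat_sum)
  also have "\<dots> \<le> (\<Sum>i\<in>S. (M0 + \<bar>X 0 i\<bar>) / \<bar>d i\<bar> + 2 * real T * B * (1 / \<bar>d i\<bar>) + 1)"
  proof (rule sum_mono)
    fix i assume i: "i \<in> S"
    then have d: "0 < \<bar>d i\<bar>"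
      using d_nonzero by simp
    then have "real (misses St i T) \<le> (M0 + \<bar>X 0 i\<bar> + 2 * real T * B + \<bar>d i\<bar>) / \<bar>d i\<bar>"
      using misses_weighted_le[OF i, of T] by (simp add: pos_le_divide_eq mult.commute)
    also have "\<dots> = (M0 + \<bar>X 0 i\<bar>) / \<bar>d i\<bar> + 2 * real T * B * (1 / \<bar>d i\<bar>) + 1"
      using d by (simp add: add_divide_distrib)
    finally show "real (misses St i T) \<le>
        (M0 + \<bar>X 0 i\<bar>) / \<bar>d i\<bar> + 2 * real T * B * (1 / \<bar>d i\<bar>) + 1" .
  qed
  also have "\<dots> = C + 2 * real T * B * \<Sigma> + real (card S)"
    unfolding C_def \<Sigma>_def by (simp add: sum.distrib sum_distrib_left)
  finally have "real T * (1 - 2 * B * \<Sigma>) \<le> C + real k"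
    using card_S by (simp add: algebra_simps)
  then have "real T \<le> (C + real k) / (1 - 2 * B * \<Sigma>)"
    using small by (simp add: field_simps)
  also have "\<dots> < Tmax"
    unfolding Tmax_def using small by (simp add: divide_strict_right_mono)
  finally show False
    using \<open>Tmax < real T\<close> by simp
qed

end

lemma abs_le_norm_inf: "j < n \<Longrightarrow> \<bar>v j\<bar> \<le> norm_inf n v"
  unfolding norm_inf_def by (intro Max_ge) auto

lemma sea_X_Suc:
  "sea_X A y m n k \<eta> X0 (Suc t) j =
     sea_X A y m n k \<eta> X0 t j
     + (oracle_u \<eta> xs S (sea_S A y m n k \<eta> X0 t) j - \<eta> * grad A y m n (sea_xt A y m n k \<eta> X0 t) j)
     + (if j \<in> S - sea_S A y m n k \<eta> X0 t then \<eta> * xs j else 0)"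
  by (simp add: sea_xt_def sea_S_def oracle_u_def Let_def)

theorem theoremC6:
  fixes m n k :: nat and A :: "nat \<Rightarrow> nat \<Rightarrow> real"
    and xs e y X0 :: "nat \<Rightarrow> real" and \<eta> :: real
  assumes "0 < m" "0 < n" "0 < k" "k < n"
    and "1 \<le> card (supp n xs)" "card (supp n xs) \<le> k"
    and "\<forall>i<m. y i = (\<Sum>j<n. A i j * xs j) + e i"
    and "0 < \<eta>"
  defines "b \<equiv> (\<lambda>t. \<lambda>j. oracle_u \<eta> xs (supp n xs) (sea_S A y m n k \<eta> X0 t) j
                         - \<eta> * grad A y m n (sea_xt A y m n k \<eta> X0 t) j)"
  defines "B \<equiv> Sup (range (\<lambda>t. norm_inf n (b t)))"
  defines "\<Sigma> \<equiv> (\<Sum>i\<in>supp n xs. 1 / (\<eta> * \<bar>xs i\<bar>))"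
  defines "Tmax \<equiv> ((\<Sum>i\<in>supp n xs.
                     (Max ((\<lambda>j. \<bar>X0 j\<bar>) ` ({..<n} - supp n xs)) + \<bar>X0 i\<bar>) / (\<eta> * \<bar>xs i\<bar>))
                   + real k + 1) / (1 - 2 * B * \<Sigma>)"
  assumes "bdd_above (range (\<lambda>t. norm_inf n (b t)))"
    and "B < 1 / (2 * \<Sigma>)"
  shows "\<exists>ts::nat. real ts \<le> Tmax \<and> supp n xs \<subseteq> sea_S A y m n k \<eta> X0 ts"
proof -
  define S where "S = supp n xs"
  define X where "X = sea_X A y m n k \<eta> X0"
  define M0 where "M0 = Max ((\<lambda>j. \<bar>X0 j\<bar>) ` ({..<n} - S))"
  have xs_nonzero: "xs i \<noteq> 0" if "i \<in> S" for i
    using that unfolding S_def supp_def by simp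
  interpret perturbed_drift n k S X b "\<lambda>j. \<eta> * xs j" B M0
  proof
    show "\<bar>b t j\<bar> \<le> B" if "j < n" for t j
      using abs_le_norm_inf[OF that, of "b t"] cSup_upper[OF rangeI assms(13)]
      unfolding B_def by (rule order_trans)
    show "\<bar>X 0 j\<bar> \<le> M0" if "j < n" "j \<notin> S" for j
      unfolding X_def M0_def using that by (intro Max_ge) auto
    show "X (Suc t) j = X t j + b t j + (if j \<in> S - largest n k (X t) then \<eta> * xs j else 0)"
      for t j
      using sea_X_Suc[where S = "supp n xs" and xs = xs]
      unfolding X_def b_def S_def by (simp only: sea_S_def)
    show "S \<subseteq> {..<n}"
      unfolding S_def supp_def by auto
  qed (use assms(4,6,8) xs_nonzero in \<open>simp_all add: S_def\<close>)
  have abs_d: "\<bar>\<eta> * xs i\<bar> = \<eta> * \<bar>xs i\<bar>" for i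
    using assms(8) by (simp add: abs_mult)
  have "S \<noteq> {}"
    using assms(5) unfolding S_def by auto
  then have "0 < \<Sigma>"
    unfolding \<Sigma>_def S_def[symmetric] using finite_S xs_nonzero assms(8)
    by (intro sum_pos) auto
  then have "2 * B * (\<Sum>i\<in>S. 1 / \<bar>\<eta> * xs i\<bar>) < 1"
    using assms(14) unfolding abs_d \<Sigma>_def S_def by (simp add: field_simps)
  from support_covered_within[OF this] show ?thesis
    unfolding Tmax_def \<Sigma>_def abs_d X_def M0_def S_def sea_S_def by simp
qed

end
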